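(* Let $X$ be a non-empty finite set and $\mathcal{P}$ a partition of $X$ with distinct block sizes $l_1<\cdots<l_r$. Then $\Sigma(X,\mathcal{P})$ is generated as a semigroup by $S(X,\mathcal{P})\cup\mathcal{B}\cup\mathcal{C}$.
   Context: $T(X,\mathcal{P})$ is the semigroup (under composition) of maps $f:X\to X$ mapping each block of $\mathcal{P}$ into some block; $S(X,\mathcal{P})$ is its group of units; $\Sigma(X,\mathcal{P})$ is the set of $f\in T(X,\mathcal{P})$ whose image intersects every block. For $i\le r-1$, $\mathcal{B}_i$ is the set of $f\in\Sigma(X,\mathcal{P})$ for which there are blocks $P_j,P_{j'},P_k,P_{k'}$ (possibly $j=j'$ or $k=k'$) with $|P_j|=|P_{j'}|=l_i$, $|P_k|=|P_{k'}|=l_{i+1}$, such that $f$ maps $P_j$ injectively into $P_k$, maps $P_{k'}$ onto $P_{j'}$, and maps every other block bijectively onto a block of the same size; $\mathcal{B}=\bigcup_{i=1}^{r-1}\mathcal{B}_i$. For $i\le r$, $\mathcal{C}_i$ is the set of $f\in\Sigma(X,\mathcal{P})$ mapping each block into a block of the same size, such that one block of size $l_i$ has image of size $l_i-1$ and all other blocks are mapped injectively; $\mathcal{C}=\bigcup_{i=1}^r\mathcal{C}_i$. *)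

theory Defs
  imports Main "HOL-Library.FuncSet" "HOL-Library.Disjoint_Sets"
begin

text \<open>Maps X \<rightarrow> X are represented as extensional functions (undefined outside X);
composition is FuncSet's compose X.\<close>

definition Tmaps :: "'a set \<Rightarrow> 'a set set \<Rightarrow> ('a \<Rightarrow> 'a) set" where
  "Tmaps X P = {f \<in> X \<rightarrow>\<^sub>E X. \<forall>B\<in>P. \<exists>C\<in>P. f ` B \<subseteq> C}"

definition Smaps :: "'a set \<Rightarrow> 'a set set \<Rightarrow> ('a \<Rightarrow> 'a) set" where
  "Smaps X P = {f \<in> Tmaps X P. \<exists>g\<in>Tmaps X P.
      compose X f g = restrict id X \<and> compose X g f = restrict id X}"

definition Sigmamaps :: "'a set \<Rightarrow> 'a set set \<Rightarrow> ('a \<Rightarrow> 'a) set" where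
  "Sigmamaps X P = {f \<in> Tmaps X P. \<forall>B\<in>P. f ` X \<inter> B \<noteq> {}}"

text \<open>l i: the i-th smallest block size (1-indexed), i = 1..r.\<close>
definition bsize :: "'a set set \<Rightarrow> nat \<Rightarrow> nat" where
  "bsize P i = sorted_list_of_set (card ` P) ! (i - 1)"

definition nsizes :: "'a set set \<Rightarrow> nat" where
  "nsizes P = card (card ` P)"

definition Bmaps :: "'a set \<Rightarrow> 'a set set \<Rightarrow> nat \<Rightarrow> ('a \<Rightarrow> 'a) set" where
  "Bmaps X P i = {f \<in> Sigmamaps X P. \<exists>Pj\<in>P. \<exists>Pj'\<in>P. \<exists>Pk\<in>P. \<exists>Pk'\<in>P.
      card Pj = bsize P i \<and> card Pj' = bsize P i \<and>
      card Pk = bsize P (i+1) \<and> card Pk' = bsize P (i+1) \<and>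
      inj_on f Pj \<and> f ` Pj \<subseteq> Pk \<and> f ` Pk' = Pj' \<and>
      (\<forall>Q\<in>P - {Pj, Pk'}. \<exists>Q'\<in>P. card Q' = card Q \<and> bij_betw f Q Q')}"

definition Bset :: "'a set \<Rightarrow> 'a set set \<Rightarrow> ('a \<Rightarrow> 'a) set" where
  "Bset X P = (\<Union>i\<in>{1..nsizes P - 1}. Bmaps X P i)"

definition Cmaps :: "'a set \<Rightarrow> 'a set set \<Rightarrow> nat \<Rightarrow> ('a \<Rightarrow> 'a) set" where
  "Cmaps X P i = {f \<in> Sigmamaps X P.
      (\<forall>Q\<in>P. \<exists>Q'\<in>P. card Q' = card Q \<and> f ` Q \<subseteq> Q') \<and>
      (\<exists>Q0\<in>P. card Q0 = bsize P i \<and> card (f ` Q0) = bsize P i - 1 \<and>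
         (\<forall>Q\<in>P - {Q0}. inj_on f Q))}"

definition Cset :: "'a set \<Rightarrow> 'a set set \<Rightarrow> ('a \<Rightarrow> 'a) set" where
  "Cset X P = (\<Union>i\<in>{1..nsizes P}. Cmaps X P i)"

inductive_set sgen :: "'a set \<Rightarrow> ('a \<Rightarrow> 'a) set \<Rightarrow> ('a \<Rightarrow> 'a) set"
  for X :: "'a set" and G :: "('a \<Rightarrow> 'a) set" where
  base: "f \<in> G \<Longrightarrow> f \<in> sgen X G"
| comp: "f \<in> sgen X G \<Longrightarrow> g \<in> sgen X G \<Longrightarrow> compose X f g \<in> sgen X G"

end

theory Submission
  imports Defs "HOL-Combinatorics.Transposition" "HOL-Library.Product_Lexorder"
begin

text \<open>A map \<open>f \<in> \<Sigma>(X,\<P>)\<close> induces a permutation \<open>\<sigma>\<close> of the blocks. While some block shrinks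
  (\<open>|\<sigma> K| < |K|\<close>), one can choose \<open>K\<close> and a block \<open>J\<close> of the next smaller size with
  \<open>|\<sigma> K| \<le> |J|\<close> and \<open>|\<sigma> K| < |\<sigma> J|\<close>; then \<open>f = g \<circ> b\<close>, where \<open>b \<in> \<B>\<close> exchanges \<open>J\<close> and \<open>K\<close>
  and \<open>g\<close> induces \<open>\<sigma> \<circ> (J K)\<close>, which by the rearrangement inequality increases the pairing
  sum \<open>\<Sum>\<^sub>Q |Q| \<cdot> |\<sigma> Q|\<close>. Once no block shrinks, \<open>\<sigma>\<close> preserves sizes; then a non-injective
  \<open>f\<close> is \<open>g \<circ> e\<close> with \<open>e \<in> \<C>\<close> identifying two points of one block and \<open>g\<close> of strictly larger
  image, while an injective \<open>f\<close> is a unit.\<close>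

lemma surj_onto_refining_kernel:
  assumes "finite K" "finite J" "card (f ` K) \<le> card J" "card J \<le> card K"
  obtains \<beta> where "\<beta> ` K = J" "\<And>u v. u \<in> K \<Longrightarrow> v \<in> K \<Longrightarrow> \<beta> u = \<beta> v \<Longrightarrow> f u = f v"
proof -
  define r where "r = inv_into K f"
  have r: "r y \<in> K" "f (r y) = y" if "y \<in> f ` K" for y
    using that unfolding r_def by (auto intro: inv_into_into f_inv_into_f)
  have rK: "r ` f ` K \<subseteq> K" using r by blast
  have "card (r ` f ` K) = card (f ` K)"
    unfolding r_def by (intro card_image inj_on_inv_into) simp
  moreover have "card (K - r ` f ` K) = card K - card (r ` f ` K)"
    using assms(1) rK by (intro card_Diff_subset) (auto intro: finite_subset)
  ultimately have "card J - card (f ` K) \<le> card (K - r ` f ` K)" using assms(4) by simp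
  then obtain W where W: "W \<subseteq> K - r ` f ` K" "card W = card J - card (f ` K)"
    by (rule obtain_subset_with_card_n)
  define R where "R = r ` f ` K \<union> W"
  have RK: "R \<subseteq> K" using rK W(1) unfolding R_def by blast
  have "card R = card J"
    unfolding R_def using W assms \<open>card (r ` f ` K) = card (f ` K)\<close>
    by (subst card_Un_disjoint) (auto intro: finite_subset)
  then obtain \<theta> where \<theta>: "bij_betw \<theta> R J"
    using finite_same_card_bij RK assms(1,2) finite_subset by metis
  define \<rho> where "\<rho> u = (if u \<in> R then u else r (f u))" for u
  have \<rho>: "\<rho> u \<in> R" "f (\<rho> u) = f u" if "u \<in> K" for u
    using that r unfolding \<rho>_def R_def by auto
  have "\<rho> ` K = R"
    using \<rho> RK by (force simp: \<rho>_def)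
  then have "(\<theta> \<circ> \<rho>) ` K = J" using \<theta> by (metis bij_betw_def image_comp)
  moreover have "f u = f v" if "u \<in> K" "v \<in> K" "(\<theta> \<circ> \<rho>) u = (\<theta> \<circ> \<rho>) v" for u v
    using that \<rho> \<theta> by (metis bij_betw_def comp_apply inj_on_def)
  ultimately show thesis by (rule that)
qed

definition pairing_sum :: "'b set \<Rightarrow> ('b \<Rightarrow> nat) \<Rightarrow> ('b \<Rightarrow> 'b) \<Rightarrow> nat" where
  "pairing_sum P h \<sigma> = (\<Sum>Q\<in>P. h Q * h (\<sigma> Q))"

lemma pairing_sum_transpose_less:
  assumes "finite P" "J \<in> P" "K \<in> P" "h J < h K" "h (\<sigma> K) < h (\<sigma> J)"
  shows "pairing_sum P h \<sigma> < pairing_sum P h (\<sigma> \<circ> transpose J K)"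
proof -
  have JK: "J \<noteq> K" using assms(4) by auto
  have P: "P = insert J (insert K (P - {J, K}))" using assms(2,3) by blast
  have split: "pairing_sum P h \<tau> = h J * h (\<tau> J) + h K * h (\<tau> K) + (\<Sum>Q\<in>P - {J, K}. h Q * h (\<tau> Q))"
    for \<tau> unfolding pairing_sum_def using assms(1) JK by (subst P) (simp add: add.assoc)
  have rest: "(\<Sum>Q\<in>P - {J, K}. h Q * h ((\<sigma> \<circ> transpose J K) Q)) = (\<Sum>Q\<in>P - {J, K}. h Q * h (\<sigma> Q))"
    by (intro sum.cong) auto
  \<comment> \<open>the exchange gains \<open>(h K - h J) * (h (\<sigma> J) - h (\<sigma> K)) > 0\<close>\<close>
  obtain m n where "h K = h J + m" "h (\<sigma> J) = h (\<sigma> K) + n" "0 < m * n"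
    using assms(4,5) by (metis less_imp_add_positive nat_0_less_mult_iff)
  then have "h J * h (\<sigma> J) + h K * h (\<sigma> K) < h J * h (\<sigma> K) + h K * h (\<sigma> J)"
    by (simp add: algebra_simps)
  then show ?thesis unfolding split[of \<sigma>] split[of "\<sigma> \<circ> transpose J K"] rest using JK by simp
qed

lemma pairing_sum_le:
  assumes "finite P" "\<sigma> ` P \<subseteq> P"
  shows "pairing_sum P h \<sigma> \<le> (\<Sum>Q\<in>P. h Q * Max (h ` P))"
  unfolding pairing_sum_def using assms by (intro sum_mono mult_le_mono2 Max_ge) auto

lemma bij_betw_nondecreasing_eq:
  fixes h :: "'b \<Rightarrow> nat"
  assumes "finite P" "bij_betw \<sigma> P P" "\<And>Q. Q \<in> P \<Longrightarrow> h Q \<le> h (\<sigma> Q)" "Q \<in> P"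
  shows "h (\<sigma> Q) = h Q"
proof -
  have "(\<Sum>Q\<in>P. h Q) = (\<Sum>Q\<in>P. (h \<circ> \<sigma>) Q)"
    using sum.reindex_bij_betw[OF assms(2), of h] by simp
  from sum_mono_inv[OF this _ assms(4,1)] show ?thesis using assms(3) by simp
qed

lemma exists_raised_at_level:
  fixes h :: "'b \<Rightarrow> nat"
  assumes "finite P" "inj_on \<sigma> P" "\<sigma> ` P \<subseteq> P" "K \<in> P" "h (\<sigma> K) = d" "h K \<noteq> d"
    and no_lowered: "\<And>Q. Q \<in> P \<Longrightarrow> h Q = d \<Longrightarrow> d \<le> h (\<sigma> Q)"
  shows "\<exists>J\<in>P. h J = d \<and> d < h (\<sigma> J)"
proof (rule ccontr)
  assume none: "\<not> ?thesis"
  have "h (\<sigma> Q) = d" if "Q \<in> P" "h Q = d" for Q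
  proof -
    have "\<not> d < h (\<sigma> Q)" using none that by blast
    then show ?thesis using no_lowered[OF that] by linarith
  qed
  then have "{Q\<in>P. h Q = d} \<subseteq> {Q\<in>P. h (\<sigma> Q) = d}" by auto
  moreover have "K \<in> {Q\<in>P. h (\<sigma> Q) = d} - {Q\<in>P. h Q = d}" using assms(4-6) by simp
  ultimately have "{Q\<in>P. h Q = d} \<subset> {Q\<in>P. h (\<sigma> Q) = d}" by blast
  then have "card {Q\<in>P. h Q = d} < card {Q\<in>P. h (\<sigma> Q) = d}"
    using assms(1) by (intro psubset_card_mono) auto
  also have "\<dots> = card (\<sigma> ` {Q\<in>P. h (\<sigma> Q) = d})"
    by (intro card_image[symmetric] inj_on_subset[OF assms(2)]) auto
  also have "\<dots> \<le> card {Q\<in>P. h Q = d}"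
    using assms(1,3) by (intro card_mono) auto
  finally show False by simp
qed

lemma obtain_adjacent_shrinking_pair:
  fixes h :: "'b \<Rightarrow> nat"
  assumes "finite P" "bij_betw \<sigma> P P" "\<exists>K\<in>P. h (\<sigma> K) < h K"
  obtains J K where "J \<in> P" "K \<in> P" "h (\<sigma> K) \<le> h J" "h J < h K" "h (\<sigma> K) < h (\<sigma> J)"
    "\<forall>q\<in>h ` P. \<not> (h J < q \<and> q < h K)"
proof -
  define D where "D = {K\<in>P. h (\<sigma> K) < h K}"
  define key where "key K = (h (\<sigma> K), h K)" for K
  obtain K where K: "K \<in> D" "\<And>K'. K' \<in> D \<Longrightarrow> key K \<le> key K'"
    using Min_in[of "key ` D"] Min_le[of "key ` D"] assms(1,3) unfolding D_def by fastforce
  define d where "d = h (\<sigma> K)"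
  define s where "s = h K"
  have KP: "K \<in> P" and "d < s" using K(1) unfolding D_def d_def s_def by auto
  have \<sigma>P: "\<sigma> ` P = P" "inj_on \<sigma> P" using assms(2) by (auto simp: bij_betw_def)
  define p where "p = Max {c \<in> h ` P. c < s}"
  have fin: "finite {c \<in> h ` P. c < s}" using assms(1) by simp
  have d: "d \<in> {c \<in> h ` P. c < s}" using KP \<sigma>P(1) \<open>d < s\<close> unfolding d_def by blast
  then have "p \<in> {c \<in> h ` P. c < s}" unfolding p_def by (intro Max_in[OF fin]) blast
  then have "p \<in> h ` P" "p < s" by auto
  have "d \<le> p" unfolding p_def using fin d by (rule Max_ge)
  have adjacent: "\<forall>q\<in>h ` P. \<not> (p < q \<and> q < s)"
    using Max_ge[OF fin] unfolding p_def by fastforce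
  have "\<exists>J\<in>P. h J = p \<and> d < h (\<sigma> J)"
  proof (cases "p = d")
    case True
    have no_lowered: "d \<le> h (\<sigma> Q)" if "Q \<in> P" "h Q = d" for Q
      using K(2)[of Q] that unfolding D_def key_def d_def by fastforce
    have "h (\<sigma> K) = d" "h K \<noteq> d" using \<open>d < s\<close> unfolding d_def s_def by auto
    then have "\<exists>J\<in>P. h J = d \<and> d < h (\<sigma> J)"
      using \<sigma>P no_lowered by (intro exists_raised_at_level[OF assms(1) _ _ KP]) auto
    then show ?thesis using True by simp
  next
    case False
    obtain J where J: "J \<in> P" "h J = p" using \<open>p \<in> h ` P\<close> by blast
    have "d < h (\<sigma> J)"
      using K(2)[of J] J False \<open>d \<le> p\<close> \<open>p < s\<close> unfolding D_def key_def d_def s_def by fastforce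
    then show ?thesis using J by blast
  qed
  then show thesis
    using that KP \<open>d \<le> p\<close> \<open>p < s\<close> adjacent unfolding d_def s_def by blast
qed

lemma sorted_list_of_set_index:
  assumes "finite S" "p \<in> S"
  shows "\<exists>i\<in>{1..card S}. sorted_list_of_set S ! (i - 1) = p"
proof -
  obtain k where "k < length (sorted_list_of_set S)" "sorted_list_of_set S ! k = p"
    using assms by (metis in_set_conv_nth set_sorted_list_of_set)
  then show ?thesis by (intro bexI[of _ "Suc k"]) auto
qed

lemma sorted_list_of_set_consecutive:
  fixes S :: "'b::linorder set"
  assumes "finite S" "p \<in> S" "s \<in> S" "p < s" "\<forall>q\<in>S. \<not> (p < q \<and> q < s)"
  shows "\<exists>i\<in>{1..card S - 1}. sorted_list_of_set S ! (i - 1) = p \<and> sorted_list_of_set S ! i = s"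
proof -
  let ?L = "sorted_list_of_set S"
  have st: "sorted_wrt (<) ?L" by (simp add: strict_sorted_list_of_set)
  obtain a b where a: "a < length ?L" "?L ! a = p" and b: "b < length ?L" "?L ! b = s"
    using assms(1-3) by (metis in_set_conv_nth set_sorted_list_of_set)
  have "a < b"
    using sorted_wrt_nth_less[OF st, of b a] a b assms(4) by (metis less_asym' nat_neq_iff)
  have "b = Suc a"
  proof (rule ccontr)
    assume "b \<noteq> Suc a"
    then have "Suc a < b" using \<open>a < b\<close> by simp
    then have "p < ?L ! Suc a" "?L ! Suc a < s"
      using sorted_wrt_nth_less[OF st] a b by auto
    moreover have "?L ! Suc a \<in> S"
      using \<open>Suc a < b\<close> b assms(1) by (metis nth_mem order.strict_trans set_sorted_list_of_set)
    ultimately show False using assms(5) by blast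
  qed
  then show ?thesis using a b by (intro bexI[of _ "Suc a"]) auto
qed

definition target_block :: "'a set set \<Rightarrow> ('a \<Rightarrow> 'a) \<Rightarrow> 'a set \<Rightarrow> 'a set" where
  "target_block P f Q = (SOME C. C \<in> P \<and> f ` Q \<subseteq> C)"

lemma
  assumes "f \<in> Tmaps X P" "Q \<in> P"
  shows target_block_in_blocks: "target_block P f Q \<in> P"
    and image_subset_target_block: "f ` Q \<subseteq> target_block P f Q"
proof -
  have "\<exists>C. C \<in> P \<and> f ` Q \<subseteq> C" using assms unfolding Tmaps_def by auto
  then have "target_block P f Q \<in> P \<and> f ` Q \<subseteq> target_block P f Q"
    unfolding target_block_def by (rule someI_ex)
  then show "target_block P f Q \<in> P" "f ` Q \<subseteq> target_block P f Q" by auto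
qed

definition block_swap :: "'a set \<Rightarrow> 'a set \<Rightarrow> 'a set \<Rightarrow> ('a \<Rightarrow> 'a) \<Rightarrow> ('a \<Rightarrow> 'a) \<Rightarrow> 'a \<Rightarrow> 'a" where
  "block_swap X J K \<alpha> \<beta> = restrict (\<lambda>w. if w \<in> J then \<alpha> w else if w \<in> K then \<beta> w else w) X"

lemma Sigmamaps_Tmaps: "f \<in> Sigmamaps X P \<Longrightarrow> f \<in> Tmaps X P"
  by (simp add: Sigmamaps_def)

lemma Tmaps_PiE: "f \<in> Tmaps X P \<Longrightarrow> f \<in> X \<rightarrow>\<^sub>E X"
  by (simp add: Tmaps_def)

locale finite_partition =
  fixes X :: "'a set" and P :: "'a set set"
  assumes finite_carrier: "finite X" and partition: "partition_on X P"
begin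

lemma block_subset: "Q \<in> P \<Longrightarrow> Q \<subseteq> X"
  using partition_onD1[OF partition] by blast

lemma block_nonempty: "Q \<in> P \<Longrightarrow> Q \<noteq> {}"
  using partition_onD3[OF partition] by blast

lemma block_eqI: "Q \<in> P \<Longrightarrow> Q' \<in> P \<Longrightarrow> x \<in> Q \<Longrightarrow> x \<in> Q' \<Longrightarrow> Q = Q'"
  using disjointD[OF partition_onD2[OF partition]] by blast

lemma ex_block: "x \<in> X \<Longrightarrow> \<exists>Q\<in>P. x \<in> Q"
  using partition_onD1[OF partition] by blast

lemma finite_blocks: "finite P"
  using finite_carrier partition_onD1[OF partition] by (metis finite_UnionD)

lemma finite_block: "Q \<in> P \<Longrightarrow> finite Q"
  using finite_carrier block_subset finite_subset by blast

lemma block_disjoint: "Q \<in> P \<Longrightarrow> Q' \<in> P \<Longrightarrow> Q \<noteq> Q' \<Longrightarrow> x \<in> Q \<Longrightarrow> x \<notin> Q'"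
  using block_eqI by blast

lemma target_block_eqI:
  assumes T: "f \<in> Tmaps X P" and Q: "Q \<in> P" and "C \<in> P" "f ` Q \<subseteq> C"
  shows "target_block P f Q = C"
proof -
  obtain x where "x \<in> Q" using block_nonempty[OF Q] by blast
  then have "f x \<in> target_block P f Q" "f x \<in> C"
    using image_subset_target_block[OF T Q] assms(4) by auto
  then show ?thesis by (rule block_eqI[OF target_block_in_blocks[OF T Q] assms(3)])
qed

lemma Sigmamaps_intro:
  assumes fE: "f \<in> X \<rightarrow>\<^sub>E X" and \<pi>: "\<pi> ` P = P" and \<sigma>: "\<sigma> ` P = P"
    and maps: "\<And>Q. Q \<in> P \<Longrightarrow> f ` \<pi> Q \<subseteq> \<sigma> Q"
  shows "f \<in> Sigmamaps X P"
proof -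
  have "\<exists>C\<in>P. f ` B \<subseteq> C" if "B \<in> P" for B
  proof -
    have "B \<in> \<pi> ` P" using that \<pi> by simp
    then obtain Q where Q: "Q \<in> P" "B = \<pi> Q" by blast
    have "\<sigma> Q \<in> P" using imageI[OF Q(1), of \<sigma>] \<sigma> by simp
    then show ?thesis using maps[OF Q(1)] Q(2) by blast
  qed
  moreover have "f ` X \<inter> C \<noteq> {}" if "C \<in> P" for C
  proof -
    have "C \<in> \<sigma> ` P" using that \<sigma> by simp
    then obtain Q where Q: "Q \<in> P" "C = \<sigma> Q" by blast
    have "\<pi> Q \<in> P" using imageI[OF Q(1), of \<pi>] \<pi> by simp
    then obtain x where x: "x \<in> \<pi> Q" using block_nonempty by blast
    then have "x \<in> X" "f x \<in> C" using block_subset[OF \<open>\<pi> Q \<in> P\<close>] maps[OF Q(1)] Q(2) by auto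
    then show ?thesis by blast
  qed
  ultimately show ?thesis using fE by (simp add: Sigmamaps_def Tmaps_def)
qed

lemma target_block_bij:
  assumes f: "f \<in> Sigmamaps X P"
  shows "bij_betw (target_block P f) P P"
proof -
  have T: "f \<in> Tmaps X P" using f by (rule Sigmamaps_Tmaps)
  have "B \<in> target_block P f ` P" if B: "B \<in> P" for B
  proof -
    obtain x where x: "x \<in> X" "f x \<in> B" using f B unfolding Sigmamaps_def by blast
    obtain Q where Q: "Q \<in> P" "x \<in> Q" using ex_block x(1) by blast
    have "f x \<in> target_block P f Q" using image_subset_target_block[OF T Q(1)] Q(2) by blast
    then have "target_block P f Q = B"
      using x(2) by (rule block_eqI[OF target_block_in_blocks[OF T Q(1)] B])
    then show ?thesis using Q(1) by blast
  qed
  then have "target_block P f ` P = P" using target_block_in_blocks[OF T] by blast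
  then show ?thesis using finite_blocks by (simp add: bij_betw_def eq_card_imp_inj_on)
qed

lemma mem_target_block_iff:
  assumes f: "f \<in> Sigmamaps X P" and Q: "Q \<in> P" and "x \<in> X"
  shows "f x \<in> target_block P f Q \<longleftrightarrow> x \<in> Q"
proof
  have T: "f \<in> Tmaps X P" using f by (rule Sigmamaps_Tmaps)
  assume x: "f x \<in> target_block P f Q"
  obtain Q' where Q': "Q' \<in> P" "x \<in> Q'" using ex_block assms(3) by blast
  have "f x \<in> target_block P f Q'" using image_subset_target_block[OF T Q'(1)] Q'(2) by blast
  then have "target_block P f Q' = target_block P f Q"
    using x by (rule block_eqI[OF target_block_in_blocks[OF T Q'(1)] target_block_in_blocks[OF T Q]])
  then have "Q' = Q"
    using target_block_bij[OF f] Q'(1) Q by (metis bij_betw_def inj_onD)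
  then show "x \<in> Q" using Q' by simp
qed (use image_subset_target_block[OF Sigmamaps_Tmaps[OF f] Q] in blast)

lemma Sigmamaps_compose:
  assumes f: "f \<in> Sigmamaps X P" and g: "g \<in> Sigmamaps X P"
  shows "compose X f g \<in> Sigmamaps X P"
proof (rule Sigmamaps_intro[where \<pi> = id and \<sigma> = "target_block P f \<circ> target_block P g"])
  have Tf: "f \<in> Tmaps X P" and Tg: "g \<in> Tmaps X P" using f g by (auto intro: Sigmamaps_Tmaps)
  show "compose X f g \<in> X \<rightarrow>\<^sub>E X"
    using Tmaps_PiE[OF Tf] Tmaps_PiE[OF Tg] by (auto simp: PiE_iff compose_def)
  show "(target_block P f \<circ> target_block P g) ` P = P"
    unfolding image_comp[symmetric] using target_block_bij[OF f] target_block_bij[OF g]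
    by (simp add: bij_betw_def)
  fix Q assume Q: "Q \<in> P"
  have "compose X f g ` Q = f ` g ` Q" using block_subset[OF Q] by (auto simp: compose_def)
  also have "\<dots> \<subseteq> target_block P f (target_block P g Q)"
    using image_subset_target_block[OF Tf target_block_in_blocks[OF Tg Q]]
      image_subset_target_block[OF Tg Q] by blast
  finally show "compose X f g ` id Q \<subseteq> (target_block P f \<circ> target_block P g) Q" by simp
qed simp

lemma sgen_subset_Sigmamaps:
  assumes "G \<subseteq> Sigmamaps X P"
  shows "sgen X G \<subseteq> Sigmamaps X P"
proof
  fix f assume "f \<in> sgen X G"
  then show "f \<in> Sigmamaps X P"
    by induction (use assms Sigmamaps_compose in auto)
qed

lemma Smaps_subset_Sigmamaps: "Smaps X P \<subseteq> Sigmamaps X P"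
proof
  fix f assume "f \<in> Smaps X P"
  then obtain g where T: "f \<in> Tmaps X P" and g: "g \<in> Tmaps X P" "compose X f g = restrict id X"
    unfolding Smaps_def by blast
  have "x \<in> f ` X" if "x \<in> X" for x
  proof -
    have "f (g x) = x" using that fun_cong[OF g(2), of x] by (simp add: compose_def)
    then show ?thesis using Tmaps_PiE[OF g(1)] that by (metis PiE_mem image_eqI)
  qed
  then have "B \<subseteq> f ` X" if "B \<in> P" for B using that block_subset by blast
  then show "f \<in> Sigmamaps X P" using T block_nonempty by (fastforce simp: Sigmamaps_def)
qed

lemma generators_subset_Sigmamaps: "Smaps X P \<union> Bset X P \<union> Cset X P \<subseteq> Sigmamaps X P"
  using Smaps_subset_Sigmamaps by (auto simp: Bset_def Cset_def Bmaps_def Cmaps_def)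

lemma inj_Sigmamaps_in_Smaps:
  assumes f: "f \<in> Sigmamaps X P" and inj: "inj_on f X"
  shows "f \<in> Smaps X P"
proof -
  have T: "f \<in> Tmaps X P" using f by (rule Sigmamaps_Tmaps)
  have fE: "f \<in> X \<rightarrow>\<^sub>E X" using T by (rule Tmaps_PiE)
  have fX: "f ` X = X"
    using fE inj finite_carrier by (intro card_subset_eq) (auto simp: card_image)
  have fQ: "f ` Q = target_block P f Q" if Q: "Q \<in> P" for Q
  proof
    show "target_block P f Q \<subseteq> f ` Q"
    proof
      fix y assume y: "y \<in> target_block P f Q"
      then obtain x where "x \<in> X" "y = f x"
        using fX block_subset[OF target_block_in_blocks[OF T Q]] by blast
      then show "y \<in> f ` Q" using mem_target_block_iff[OF f Q] y by auto
    qed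
  qed (rule image_subset_target_block[OF T Q])
  define g where "g = restrict (inv_into X f) X"
  have gE: "g \<in> X \<rightarrow>\<^sub>E X" unfolding g_def using fX by (auto intro: inv_into_into)
  have gQ: "g ` target_block P f Q \<subseteq> Q" if Q: "Q \<in> P" for Q
  proof -
    have "g (f q) = q" if "q \<in> Q" for q
      using that block_subset[OF Q] fE inj by (auto simp: g_def inv_into_f_f)
    then show ?thesis unfolding fQ[OF Q, symmetric] by auto
  qed
  have "g \<in> Sigmamaps X P"
    using target_block_bij[OF f] gQ
    by (intro Sigmamaps_intro[OF gE, where \<pi> = "target_block P f" and \<sigma> = id]) (auto simp: bij_betw_def)
  moreover have "compose X f g = restrict id X"
    using fX by (intro ext) (auto simp: compose_def g_def f_inv_into_f[of _ f X])
  moreover have "compose X g f = restrict id X"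
    using fE inj by (intro ext) (auto simp: compose_def g_def inv_into_f_f)
  ultimately show ?thesis using T by (auto simp: Smaps_def intro: Sigmamaps_Tmaps)
qed

lemma bsize_index: "Q \<in> P \<Longrightarrow> \<exists>i\<in>{1..nsizes P}. bsize P i = card Q"
  using sorted_list_of_set_index[of "card ` P" "card Q"] finite_blocks
  unfolding bsize_def nsizes_def by auto

lemma bsize_consecutive:
  assumes "J \<in> P" "K \<in> P" "card J < card K" "\<forall>q\<in>card ` P. \<not> (card J < q \<and> q < card K)"
  shows "\<exists>i\<in>{1..nsizes P - 1}. bsize P i = card J \<and> bsize P (i + 1) = card K"
  using sorted_list_of_set_consecutive[of "card ` P" "card J" "card K"] assms finite_blocks
  unfolding bsize_def nsizes_def by auto

lemma collapse_in_Cset: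
  assumes Q: "Q \<in> P" and "x \<in> Q" "y \<in> Q" "x \<noteq> y"
  shows "(restrict id X)(x := y) \<in> Cset X P"
proof -
  let ?e = "(restrict id X)(x := y)"
  have xy: "x \<in> X" "y \<in> X" using assms block_subset by auto
  have e_fixes: "?e w = w" if "w \<in> B" "B \<in> P - {Q}" for w B
  proof -
    have "w \<noteq> x" using block_disjoint[OF Q _ _ assms(2), of B] that by auto
    moreover have "w \<in> X" using that block_subset by blast
    ultimately show ?thesis by simp
  qed
  have e_blocks: "?e ` B \<subseteq> B" if B: "B \<in> P" for B
  proof (cases "B = Q")
    case True
    then show ?thesis using assms block_subset[OF Q] by auto
  next
    case False
    then show ?thesis using e_fixes B by auto
  qed
  have eE: "?e \<in> X \<rightarrow>\<^sub>E X"
    using PiE_fun_upd[of y "\<lambda>_. X" x "restrict id X" X] xy by (simp add: insert_absorb)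
  have "?e \<in> Sigmamaps X P" by (rule Sigmamaps_intro[OF eE, where \<pi> = id and \<sigma> = id]) (use e_blocks in auto)
  moreover have "\<forall>B\<in>P. \<exists>B'\<in>P. card B' = card B \<and> ?e ` B \<subseteq> B'" using e_blocks by blast
  moreover have "?e ` Q = Q - {x}"
  proof
    show "?e ` Q \<subseteq> Q - {x}" using assms block_subset[OF Q] by auto
    have "?e w = w" if "w \<in> Q - {x}" for w using that block_subset[OF Q] by auto
    then show "Q - {x} \<subseteq> ?e ` Q" by (metis DiffD1 image_eqI subsetI)
  qed
  then have "card (?e ` Q) = card Q - 1"
    using assms(2) finite_block[OF Q] by simp
  moreover have "inj_on ?e B" if "B \<in> P - {Q}" for B
    using e_fixes[OF _ that] by (auto simp: inj_on_def)
  moreover obtain i where i: "i \<in> {1..nsizes P}" "bsize P i = card Q" using bsize_index[OF Q] by blast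
  ultimately have "?e \<in> Cmaps X P i"
    unfolding Cmaps_def by (intro CollectI conjI bexI[OF _ Q]) simp_all
  then show ?thesis unfolding Cset_def using i(1) by blast
qed

lemma size_preserving_factor_through_Cset:
  assumes f: "f \<in> Sigmamaps X P" and sizes: "\<forall>Q\<in>P. card (target_block P f Q) = card Q"
    and "\<not> inj_on f X"
  obtains g e where "g \<in> Sigmamaps X P" "\<forall>Q\<in>P. card (target_block P g Q) = card Q"
    "e \<in> Cset X P" "compose X g e = f" "card (f ` X) < card (g ` X)"
proof -
  have T: "f \<in> Tmaps X P" using f by (rule Sigmamaps_Tmaps)
  have fE: "f \<in> X \<rightarrow>\<^sub>E X" using T by (rule Tmaps_PiE)
  obtain x y where xy: "x \<in> X" "y \<in> X" "x \<noteq> y" "f x = f y" using assms(3) by (auto simp: inj_on_def)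
  obtain Q where Q: "Q \<in> P" "x \<in> Q" using ex_block xy(1) by blast
  have "f y \<in> target_block P f Q" using image_subset_target_block[OF T Q(1)] Q(2) xy(4) by auto
  then have "y \<in> Q" using mem_target_block_iff[OF f Q(1) xy(2)] by simp
  have "card (f ` Q) \<le> card (Q - {x})"
  proof -
    have "f ` Q = f ` (Q - {x})" using \<open>y \<in> Q\<close> xy by (auto simp: image_iff)
    then show ?thesis using finite_block[OF Q(1)] by (simp add: card_image_le)
  qed
  also have "\<dots> < card Q" using finite_block[OF Q(1)] Q(2) by (rule card_Diff1_less)
  also have "\<dots> = card (target_block P f Q)" using sizes Q(1) by simp
  finally obtain z where z: "z \<in> target_block P f Q" "z \<notin> f ` Q"
    using card_mono[OF finite_imageI[OF finite_block[OF Q(1)]]] by (meson not_le subsetI)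
  have "z \<in> X" using z(1) block_subset[OF target_block_in_blocks[OF T Q(1)]] by blast
  have "z \<notin> f ` X"
  proof
    assume "z \<in> f ` X"
    then obtain w where "w \<in> X" "z = f w" by blast
    then show False using z mem_target_block_iff[OF f Q(1) \<open>w \<in> X\<close>] by auto
  qed
  define g where "g = f(x := z)"
  define e where "e = (restrict id X)(x := y)"
  have gE: "g \<in> X \<rightarrow>\<^sub>E X"
    using PiE_fun_upd[of z "\<lambda>_. X" x f X] \<open>z \<in> X\<close> fE xy(1) by (simp add: g_def insert_absorb)
  have g_blocks: "g ` B \<subseteq> target_block P f B" if B: "B \<in> P" for B
  proof (cases "x \<in> B")
    case True
    then have "B = Q" using Q(2) by (rule block_eqI[OF B Q(1)])
    then show ?thesis using image_subset_target_block[OF T B] z(1) by (auto simp: g_def)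
  next
    case False
    then show ?thesis using image_subset_target_block[OF T B] by (auto simp: g_def)
  qed
  have g: "g \<in> Sigmamaps X P"
    using target_block_bij[OF f] g_blocks
    by (intro Sigmamaps_intro[OF gE, where \<pi> = id and \<sigma> = "target_block P f"]) (auto simp: bij_betw_def)
  have "target_block P g B = target_block P f B" if "B \<in> P" for B
    using target_block_eqI[OF Sigmamaps_Tmaps[OF g] that target_block_in_blocks[OF T that] g_blocks[OF that]] .
  then have "\<forall>Q\<in>P. card (target_block P g Q) = card Q" using sizes by simp
  moreover have "e \<in> Cset X P" unfolding e_def using Q \<open>y \<in> Q\<close> xy(3) by (rule collapse_in_Cset)
  moreover have fge: "compose X g e = f"
  proof
    fix w show "compose X g e w = f w"
    proof (cases "w \<in> X")
      case True
      then show ?thesis using xy by (cases "w = x") (simp_all add: compose_def g_def e_def)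
    next
      case False
      then show ?thesis using PiE_arb[OF fE False] by (simp add: compose_def)
    qed
  qed
  moreover have "card (f ` X) < card (g ` X)"
  proof -
    have "f w \<in> g ` X" if "w \<in> X" for w
    proof -
      have "f w = g (e w)" using fun_cong[OF fge, of w] that by (simp add: compose_def)
      moreover have "e w \<in> X" using that xy(2) by (simp add: e_def)
      ultimately show ?thesis by blast
    qed
    moreover have "z \<in> g ` X" using xy(1) image_eqI[of z g x X] by (simp add: g_def)
    ultimately have "insert z (f ` X) \<subseteq> g ` X" by blast
    have "card (f ` X) < card (insert z (f ` X))" using \<open>z \<notin> f ` X\<close> finite_carrier by simp
    also have "\<dots> \<le> card (g ` X)"
      using finite_carrier \<open>insert z (f ` X) \<subseteq> g ` X\<close> by (intro card_mono) simp_all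
    finally show ?thesis .
  qed
  ultimately show thesis using that g by blast
qed

lemma size_preserving_in_sgen:
  assumes "f \<in> Sigmamaps X P" "\<forall>Q\<in>P. card (target_block P f Q) = card Q"
  shows "f \<in> sgen X (Smaps X P \<union> Bset X P \<union> Cset X P)"
  using assms
proof (induction "card X - card (f ` X)" arbitrary: f rule: less_induct)
  case less
  show ?case
  proof (cases "inj_on f X")
    case True
    then show ?thesis using inj_Sigmamaps_in_Smaps less.prems(1) by (auto intro: sgen.base)
  next
    case False
    then obtain g e where g: "g \<in> Sigmamaps X P" "\<forall>Q\<in>P. card (target_block P g Q) = card Q"
      and e: "e \<in> Cset X P" and fge: "compose X g e = f" and larger: "card (f ` X) < card (g ` X)"
      using size_preserving_factor_through_Cset less.prems by metis
    have "g ` X \<subseteq> X" using Tmaps_PiE[OF Sigmamaps_Tmaps[OF g(1)]] by auto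
    then have "card (g ` X) \<le> card X" using finite_carrier by (rule card_mono[rotated])
    then have "g \<in> sgen X (Smaps X P \<union> Bset X P \<union> Cset X P)"
      using less.hyps[OF _ g] larger by linarith
    then show ?thesis using e fge sgen.comp sgen.base by (metis UnI2)
  qed
qed

lemma
  assumes J: "J \<in> P" and K: "K \<in> P" and "J \<noteq> K"
  shows block_swap_first: "w \<in> J \<Longrightarrow> block_swap X J K \<alpha> \<beta> w = \<alpha> w"
    and block_swap_second: "w \<in> K \<Longrightarrow> block_swap X J K \<alpha> \<beta> w = \<beta> w"
    and block_swap_other: "Q \<in> P - {J, K} \<Longrightarrow> w \<in> Q \<Longrightarrow> block_swap X J K \<alpha> \<beta> w = w"
proof -
  show "block_swap X J K \<alpha> \<beta> w = \<alpha> w" if "w \<in> J"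
    using that block_subset[OF J] by (auto simp: block_swap_def)
  show "block_swap X J K \<alpha> \<beta> w = \<beta> w" if "w \<in> K"
  proof -
    have "w \<notin> J" using block_disjoint[OF K J] \<open>J \<noteq> K\<close> that by auto
    then show ?thesis using that block_subset[OF K] by (auto simp: block_swap_def)
  qed
  show "block_swap X J K \<alpha> \<beta> w = w" if "Q \<in> P - {J, K}" "w \<in> Q"
  proof -
    have "w \<notin> J" "w \<notin> K" using block_disjoint[of Q J w] block_disjoint[of Q K w] J K that by auto
    then show ?thesis using that block_subset by (auto simp: block_swap_def)
  qed
qed

lemma block_swap_image:
  assumes J: "J \<in> P" and K: "K \<in> P" and "J \<noteq> K" and "\<alpha> ` J \<subseteq> K" "\<beta> ` K \<subseteq> J" and Q: "Q \<in> P"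
  shows "block_swap X J K \<alpha> \<beta> ` Q \<subseteq> transpose J K Q"
proof -
  consider "Q = J" | "Q = K" | "Q \<in> P - {J, K}" using Q by blast
  then show ?thesis
  proof cases
    case 1
    then show ?thesis using assms(4) block_swap_first[OF J K \<open>J \<noteq> K\<close>] by auto
  next
    case 2
    then show ?thesis using assms(5) block_swap_second[OF J K \<open>J \<noteq> K\<close>] \<open>J \<noteq> K\<close> by auto
  next
    case 3
    then show ?thesis using block_swap_other[OF J K \<open>J \<noteq> K\<close> 3] by auto
  qed
qed

lemma block_swap_in_Bmaps:
  assumes J: "J \<in> P" and K: "K \<in> P" and "J \<noteq> K"
    and sizes: "bsize P i = card J" "bsize P (i + 1) = card K"
    and \<alpha>: "\<alpha> ` J \<subseteq> K" "inj_on \<alpha> J" and \<beta>: "\<beta> ` K = J"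
  shows "block_swap X J K \<alpha> \<beta> \<in> Bmaps X P i"
proof -
  let ?b = "block_swap X J K \<alpha> \<beta>"
  have bE: "?b \<in> X \<rightarrow>\<^sub>E X"
    using \<alpha>(1) \<beta> block_subset[OF J] block_subset[OF K] by (auto simp: block_swap_def PiE_iff)
  have Sigma: "?b \<in> Sigmamaps X P"
    using block_swap_image[OF J K \<open>J \<noteq> K\<close> \<alpha>(1) equalityD1[OF \<beta>]] J K
    by (intro Sigmamaps_intro[OF bE, where \<pi> = id and \<sigma> = "transpose J K"]) auto
  have first: "?b ` J \<subseteq> K" "inj_on ?b J"
    using \<alpha> block_swap_first[OF J K \<open>J \<noteq> K\<close>] by (auto simp: inj_on_def)
  have second: "?b ` K = J"
    using block_swap_second[OF J K \<open>J \<noteq> K\<close>] \<beta> by (metis image_cong)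
  have others: "\<forall>Q\<in>P - {J, K}. \<exists>Q'\<in>P. card Q' = card Q \<and> bij_betw ?b Q Q'"
  proof
    fix Q assume Q: "Q \<in> P - {J, K}"
    then have "bij_betw ?b Q Q"
      using block_swap_other[OF J K \<open>J \<noteq> K\<close> Q] by (simp add: bij_betw_def inj_on_def)
    then show "\<exists>Q'\<in>P. card Q' = card Q \<and> bij_betw ?b Q Q'" using Q by blast
  qed
  show ?thesis
    unfolding Bmaps_def
    by (rule CollectI, rule conjI, rule Sigma, rule bexI[OF _ J], rule bexI[OF _ J],
        rule bexI[OF _ K], rule bexI[OF _ K]) (simp add: sizes[symmetric] first second others)
qed

lemma Sigmamaps_factor_through:
  assumes f: "f \<in> Sigmamaps X P" and b: "b \<in> Sigmamaps X P"
    and ker: "\<And>u v. u \<in> X \<Longrightarrow> v \<in> X \<Longrightarrow> b u = b v \<Longrightarrow> f u = f v"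
  obtains g where "g \<in> Sigmamaps X P" "compose X g b = f"
    "\<And>Q. Q \<in> P \<Longrightarrow> target_block P g (target_block P b Q) = target_block P f Q"
proof -
  have Tf: "f \<in> Tmaps X P" and Tb: "b \<in> Tmaps X P" using f b by (auto intro: Sigmamaps_Tmaps)
  \<comment> \<open>outside \<open>b ` X\<close>, \<open>g\<close> may take any value of the right block; we pull back a point of
    \<open>b ` X\<close> in the same block\<close>
  define r where "r w = (if w \<in> b ` X then w else SOME v. v \<in> b ` X \<and> (\<exists>B\<in>P. w \<in> B \<and> v \<in> B))" for w
  have r: "r w \<in> b ` X \<and> (\<exists>B\<in>P. w \<in> B \<and> r w \<in> B)" if w: "w \<in> X" for w
  proof (cases "w \<in> b ` X")
    case True
    then show ?thesis using ex_block[OF w] by (simp add: r_def)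
  next
    case False
    obtain B where B: "B \<in> P" "w \<in> B" using ex_block w by blast
    then obtain v where "v \<in> b ` X" "v \<in> B" using b unfolding Sigmamaps_def by blast
    then have "\<exists>v. v \<in> b ` X \<and> (\<exists>B\<in>P. w \<in> B \<and> v \<in> B)" using B by blast
    from someI_ex[OF this] show ?thesis using False by (simp add: r_def)
  qed
  define g where "g = restrict (\<lambda>w. f (inv_into X b (r w))) X"
  have inv_r: "inv_into X b (r w) \<in> X" "b (inv_into X b (r w)) = r w" if "w \<in> X" for w
    using r[OF that] by (auto intro: inv_into_into f_inv_into_f)
  have gE: "g \<in> X \<rightarrow>\<^sub>E X"
    using inv_r(1) Tmaps_PiE[OF Tf] by (auto simp: g_def PiE_iff)
  have g_blocks: "g ` target_block P b Q \<subseteq> target_block P f Q" if Q: "Q \<in> P" for Q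
  proof
    fix y assume "y \<in> g ` target_block P b Q"
    then obtain w where w: "w \<in> target_block P b Q" "y = g w" by blast
    have wX: "w \<in> X" using w(1) block_subset[OF target_block_in_blocks[OF Tb Q]] by blast
    obtain B where B: "B \<in> P" "w \<in> B" "r w \<in> B" using r[OF wX] by blast
    have "B = target_block P b Q"
      using block_eqI[OF B(1) target_block_in_blocks[OF Tb Q] B(2) w(1)] .
    then have "inv_into X b (r w) \<in> Q"
      using mem_target_block_iff[OF b Q inv_r(1)[OF wX]] inv_r(2)[OF wX] B(3) by simp
    then show "y \<in> target_block P f Q"
      using w(2) wX image_subset_target_block[OF Tf Q] by (auto simp: g_def)
  qed
  have g: "g \<in> Sigmamaps X P"
    using target_block_bij[OF b] target_block_bij[OF f] g_blocks
    by (intro Sigmamaps_intro[OF gE, where \<pi> = "target_block P b" and \<sigma> = "target_block P f"])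
      (auto simp: bij_betw_def)
  have "compose X g b = f"
  proof
    fix u show "compose X g b u = f u"
    proof (cases "u \<in> X")
      case True
      then have bu: "b u \<in> b ` X" by (rule imageI)
      have "b u \<in> X" using Tmaps_PiE[OF Tb] True by (rule PiE_mem)
      moreover have "f (inv_into X b (b u)) = f u"
        by (rule ker[OF inv_into_into[OF bu] True f_inv_into_f[OF bu]])
      ultimately show ?thesis using True bu by (simp add: compose_def g_def r_def)
    next
      case False
      then show ?thesis using PiE_arb[OF Tmaps_PiE[OF Tf] False] by (simp add: compose_def)
    qed
  qed
  moreover have "target_block P g (target_block P b Q) = target_block P f Q" if Q: "Q \<in> P" for Q
    using target_block_eqI[OF Sigmamaps_Tmaps[OF g] target_block_in_blocks[OF Tb Q]
        target_block_in_blocks[OF Tf Q] g_blocks[OF Q]] .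
  ultimately show thesis using that g by blast
qed

lemma shrinking_factor_through_Bset:
  assumes f: "f \<in> Sigmamaps X P" and "\<exists>K\<in>P. card (target_block P f K) < card K"
  obtains g b where "g \<in> Sigmamaps X P" "b \<in> Bset X P" "compose X g b = f"
    "pairing_sum P card (target_block P f) < pairing_sum P card (target_block P g)"
proof -
  have T: "f \<in> Tmaps X P" using f by (rule Sigmamaps_Tmaps)
  obtain J K where J: "J \<in> P" and K: "K \<in> P" and shrink: "card (target_block P f K) \<le> card J"
    and JK: "card J < card K" and gain: "card (target_block P f K) < card (target_block P f J)"
    and adjacent: "\<forall>q\<in>card ` P. \<not> (card J < q \<and> q < card K)"
    using obtain_adjacent_shrinking_pair[OF finite_blocks target_block_bij[OF f] assms(2)] by blast
  have "J \<noteq> K" using JK by auto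
  obtain i where i: "i \<in> {1..nsizes P - 1}" "bsize P i = card J" "bsize P (i + 1) = card K"
    using bsize_consecutive[OF J K JK adjacent] by blast
  obtain \<alpha> where \<alpha>: "\<alpha> ` J \<subseteq> K" "inj_on \<alpha> J"
    using card_le_inj[OF finite_block[OF J] finite_block[OF K]] JK by auto
  have "card (f ` K) \<le> card J"
    using card_mono[OF finite_block[OF target_block_in_blocks[OF T K]] image_subset_target_block[OF T K]]
      shrink by simp
  then obtain \<beta> where \<beta>: "\<beta> ` K = J" and ker_\<beta>: "\<And>u v. u \<in> K \<Longrightarrow> v \<in> K \<Longrightarrow> \<beta> u = \<beta> v \<Longrightarrow> f u = f v"
    using surj_onto_refining_kernel[OF finite_block[OF K] finite_block[OF J] _ less_imp_le[OF JK]] by blast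
  define b where "b = block_swap X J K \<alpha> \<beta>"
  have bBi: "b \<in> Bmaps X P i"
    unfolding b_def using J K \<open>J \<noteq> K\<close> i(2,3) \<alpha> \<beta> by (rule block_swap_in_Bmaps)
  then have bB: "b \<in> Bset X P" unfolding Bset_def using i(1) by blast
  have b: "b \<in> Sigmamaps X P" using bBi by (simp add: Bmaps_def)
  have target_b: "target_block P b Q = transpose J K Q" if Q: "Q \<in> P" for Q
  proof -
    have "transpose J K Q \<in> P" using J K Q by (simp add: transpose_def)
    then show ?thesis
      using target_block_eqI[OF Sigmamaps_Tmaps[OF b] Q]
        block_swap_image[OF J K \<open>J \<noteq> K\<close> \<alpha>(1) equalityD1[OF \<beta>] Q] unfolding b_def by blast
  qed
  have ker_b: "f u = f v" if uv: "u \<in> X" "v \<in> X" "b u = b v" for u v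
  proof -
    obtain Q where Q: "Q \<in> P" "u \<in> Q" using ex_block uv(1) by blast
    have "b v \<in> target_block P b Q"
      using image_subset_target_block[OF Sigmamaps_Tmaps[OF b] Q(1)] Q(2) uv(3) by auto
    then have "v \<in> Q" using mem_target_block_iff[OF b Q(1) uv(2)] by simp
    consider "Q = J" | "Q = K" | "Q \<in> P - {J, K}" using Q(1) by blast
    then show ?thesis
    proof cases
      case 1
      then have "\<alpha> u = \<alpha> v"
        using uv(3) Q(2) \<open>v \<in> Q\<close> block_swap_first[OF J K \<open>J \<noteq> K\<close>] by (simp add: b_def)
      then show ?thesis using \<alpha>(2) 1 Q(2) \<open>v \<in> Q\<close> by (metis inj_onD)
    next
      case 2
      then have "\<beta> u = \<beta> v"
        using uv(3) Q(2) \<open>v \<in> Q\<close> block_swap_second[OF J K \<open>J \<noteq> K\<close>] by (simp add: b_def)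
      then show ?thesis using ker_\<beta> 2 Q(2) \<open>v \<in> Q\<close> by blast
    next
      case 3
      then show ?thesis
        using uv(3) Q(2) \<open>v \<in> Q\<close> block_swap_other[OF J K \<open>J \<noteq> K\<close> 3] by (simp add: b_def)
    qed
  qed
  obtain g where g: "g \<in> Sigmamaps X P" "compose X g b = f"
    and target_g: "\<And>Q. Q \<in> P \<Longrightarrow> target_block P g (target_block P b Q) = target_block P f Q"
    using Sigmamaps_factor_through[OF f b ker_b] by blast
  have "target_block P g Q = (target_block P f \<circ> transpose J K) Q" if "Q \<in> P" for Q
  proof -
    have "transpose J K Q \<in> P" using that J K by (simp add: transpose_def)
    then show ?thesis using target_g target_b by fastforce
  qed
  then have "pairing_sum P card (target_block P g) = pairing_sum P card (target_block P f \<circ> transpose J K)"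
    unfolding pairing_sum_def by (intro sum.cong) auto
  moreover have "pairing_sum P card (target_block P f) < \<dots>"
    using finite_blocks J K JK gain by (rule pairing_sum_transpose_less)
  ultimately show thesis using that g bB by simp
qed

lemma Sigmamaps_subset_sgen: "Sigmamaps X P \<subseteq> sgen X (Smaps X P \<union> Bset X P \<union> Cset X P)"
proof
  fix f assume "f \<in> Sigmamaps X P"
  define N where "N = (\<Sum>Q\<in>P. card Q * Max (card ` P))"
  have bounded: "pairing_sum P card (target_block P g) \<le> N" if "g \<in> Sigmamaps X P" for g
    unfolding N_def using pairing_sum_le[OF finite_blocks] target_block_bij[OF that]
    by (simp add: bij_betw_def)
  show "f \<in> sgen X (Smaps X P \<union> Bset X P \<union> Cset X P)"
    using \<open>f \<in> Sigmamaps X P\<close>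
  proof (induction "N - pairing_sum P card (target_block P f)" arbitrary: f rule: less_induct)
    case less
    show ?case
    proof (cases "\<exists>K\<in>P. card (target_block P f K) < card K")
      case True
      then obtain g b where g: "g \<in> Sigmamaps X P" and b: "b \<in> Bset X P" and fgb: "compose X g b = f"
        and gain: "pairing_sum P card (target_block P f) < pairing_sum P card (target_block P g)"
        using shrinking_factor_through_Bset[OF less.prems] by blast
      have "g \<in> sgen X (Smaps X P \<union> Bset X P \<union> Cset X P)"
        using less.hyps[OF _ g] gain bounded[OF g] by linarith
      then show ?thesis using b fgb sgen.comp sgen.base by (metis UnI1 UnI2)
    next
      case False
      then have "card (target_block P f Q) = card Q" if "Q \<in> P" for Q
        using bij_betw_nondecreasing_eq[OF finite_blocks target_block_bij[OF less.prems], of card] that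
        by (simp add: not_less)
      then show ?thesis using size_preserving_in_sgen less.prems by blast
    qed
  qed
qed

end

theorem corollary4p5:
  fixes X :: "'a set" and P :: "'a set set"
  assumes "finite X" and "X \<noteq> {}" and "partition_on X P"
  shows "Sigmamaps X P = sgen X (Smaps X P \<union> Bset X P \<union> Cset X P)"
proof -
  interpret finite_partition X P using assms(1,3) by unfold_locales
  show ?thesis
    using Sigmamaps_subset_sgen sgen_subset_Sigmamaps[OF generators_subset_Sigmamaps] by blast
qed

end
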